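(* Let $k$ be a field of prime characteristic $p$. Define $T$-spaces of $k_0\langle X\rangle$ by $H_1=\{x_1^p\}^S$, $H_{n+1}=(H_nH_1)^S$, and $S^{(p)}_1=\{S^{(p)}\}^S$, $S^{(p)}_{n+1}=(S^{(p)}_nS^{(p)}_1)^S$ for $n\ge1$, where $S^{(p)}=\sum_{\sigma\in\Sigma_p}\prod_{i=1}^p x_{\sigma(i)}$. Then $S^{(p)}_m\subseteq H_m$ for every $m\ge1$.
   Context: $X=\{x_1,x_2,\ldots\}$ is countably infinite; $k_0\langle X\rangle$ is the free associative (non-unital) $k$-algebra on $X$. A $T$-space is a $k$-subspace of $k_0\langle X\rangle$ invariant under every algebra endomorphism of $k_0\langle X\rangle$; $(A)^S$ is the $T$-space generated by a subset $A$. For subsets $A,B$, $AB=\{ab:a\in A,b\in B\}$. $\Sigma_p$ is the symmetric group on $p$ letters. *)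

theory Defs
  imports "HOL-Computational_Algebra.Primes" "HOL-Library.Poly_Mapping" "HOL-Combinatorics.Permutations"
begin

text \<open>The free associative algebra on countably many variables: finitely supported
  functions from words (lists of variable indices) to coefficients.  The variable
  x_i of the paper is the one-letter word [i - 1].  The non-unital free algebra
  k_0<X> is the subset of elements whose support avoids the empty word.\<close>

type_synonym 'k ncpoly = "nat list \<Rightarrow>\<^sub>0 'k"

definition free0 :: "'k::field ncpoly set" where
  "free0 = {f. [] \<notin> Poly_Mapping.keys f}"

definition ncsmult :: "'k::field \<Rightarrow> 'k ncpoly \<Rightarrow> 'k ncpoly" where
  "ncsmult c f = Poly_Mapping.map (\<lambda>a. c * a) f"

definition ncmult :: "'k::field ncpoly \<Rightarrow> 'k ncpoly \<Rightarrow> 'k ncpoly" where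
  "ncmult f g = (\<Sum>u\<in>Poly_Mapping.keys f. \<Sum>v\<in>Poly_Mapping.keys g.
      Poly_Mapping.single (u @ v) (Poly_Mapping.lookup f u * Poly_Mapping.lookup g v))"

definition ncone :: "'k::field ncpoly" where
  "ncone = Poly_Mapping.single [] 1"

definition ncvar :: "nat \<Rightarrow> 'k::field ncpoly" where
  "ncvar i = Poly_Mapping.single [i - 1] 1"

definition ncpow :: "'k::field ncpoly \<Rightarrow> nat \<Rightarrow> 'k ncpoly" where
  "ncpow f n = (ncmult f ^^ n) ncone"

definition wordeval :: "(nat \<Rightarrow> 'k::field ncpoly) \<Rightarrow> nat list \<Rightarrow> 'k ncpoly" where
  "wordeval \<phi> w = foldr (\<lambda>i r. ncmult (\<phi> i) r) w ncone"

definition ncsubst :: "(nat \<Rightarrow> 'k::field ncpoly) \<Rightarrow> 'k ncpoly \<Rightarrow> 'k ncpoly" where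
  "ncsubst \<phi> f = (\<Sum>w\<in>Poly_Mapping.keys f. ncsmult (Poly_Mapping.lookup f w) (wordeval \<phi> w))"

definition endo0 :: "('k::field ncpoly \<Rightarrow> 'k ncpoly) set" where
  "endo0 = {h. \<exists>\<phi>. (\<forall>i. \<phi> i \<in> free0) \<and> (\<forall>f\<in>free0. h f = ncsubst \<phi> f)}"

definition subspace0 :: "'k::field ncpoly set \<Rightarrow> bool" where
  "subspace0 V \<longleftrightarrow> V \<subseteq> free0 \<and> 0 \<in> V \<and> (\<forall>f\<in>V. \<forall>g\<in>V. f + g \<in> V)
      \<and> (\<forall>c. \<forall>f\<in>V. ncsmult c f \<in> V)"

definition Tspace :: "'k::field ncpoly set \<Rightarrow> bool" where
  "Tspace V \<longleftrightarrow> subspace0 V \<and> (\<forall>h\<in>endo0. \<forall>f\<in>V. h f \<in> V)"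

definition Tgen :: "'k::field ncpoly set \<Rightarrow> 'k ncpoly set" where
  "Tgen A = \<Inter>{V. Tspace V \<and> A \<subseteq> V}"

definition setmult :: "'k::field ncpoly set \<Rightarrow> 'k ncpoly set \<Rightarrow> 'k ncpoly set" where
  "setmult A B = {ncmult a b | a b. a \<in> A \<and> b \<in> B}"

text \<open>Given a generating set A, Titer A n is the T-space A_(n+1), where
  A_1 = (A)^S and A_(n+1) = (A_n A_1)^S.\<close>
primrec Titer :: "'k::field ncpoly set \<Rightarrow> nat \<Rightarrow> 'k ncpoly set" where
  "Titer A 0 = Tgen A"
| "Titer A (Suc n) = Tgen (setmult (Titer A n) (Tgen A))"

definition Spoly :: "nat \<Rightarrow> 'k::field ncpoly" where
  "Spoly p = (\<Sum>\<sigma>\<in>{\<sigma>. \<sigma> permutes {1..p}}.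
      foldr ncmult (map (\<lambda>i. ncvar (\<sigma> i)) [1..<p+1]) ncone)"

definition Hseq :: "nat \<Rightarrow> nat \<Rightarrow> 'k::field ncpoly set" where
  "Hseq p m = Titer {ncpow (ncvar 1) p} (m - 1)"

definition Sseq :: "nat \<Rightarrow> nat \<Rightarrow> 'k::field ncpoly set" where
  "Sseq p m = Titer {Spoly p} (m - 1)"

end

theory Submission
  imports Defs
begin

text \<open>The inclusion holds over any field.  For a finite set D of variables let x_D be
  their sum; substituting x_D for x_1 shows x_D^p \<in> (x_1^p)^S, and x_D^p is the sum of
  all words of length p in the letters of D.  By inclusion-exclusion over D \<subseteq> {x_1..x_p},
  the alternating sum of these powers keeps exactly the words using every letter, i.e.
  S^(p) = \<Sum>D (-1)^(p - |D|) x_D^p.  Hence (S^(p))^S \<subseteq> (x_1^p)^S, and the iterated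
  products of T-spaces preserve the inclusion.\<close>

lemma lookup_ncsmult: "Poly_Mapping.lookup (ncsmult c f) w = c * Poly_Mapping.lookup f w"
  unfolding ncsmult_def by (simp add: Poly_Mapping.map.rep_eq when_def)

lemma ncsmult_one [simp]: "ncsmult 1 f = f"
  by (rule poly_mapping_eqI) (simp add: lookup_ncsmult)

lemma ncmult_eq_sum_over:
  assumes "finite U" "finite V" "Poly_Mapping.keys f \<subseteq> U" "Poly_Mapping.keys g \<subseteq> V"
  shows "ncmult f g = (\<Sum>u\<in>U. \<Sum>v\<in>V.
      Poly_Mapping.single (u @ v) (Poly_Mapping.lookup f u * Poly_Mapping.lookup g v))"
proof -
  have inner: "(\<Sum>v\<in>V. Poly_Mapping.single (u @ v) (Poly_Mapping.lookup f u * Poly_Mapping.lookup g v))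
     = (\<Sum>v\<in>Poly_Mapping.keys g. Poly_Mapping.single (u @ v) (Poly_Mapping.lookup f u * Poly_Mapping.lookup g v))"
    for u
    by (rule sum.mono_neutral_right[OF assms(2,4)]) (auto simp: in_keys_iff)
  have "(\<Sum>u\<in>U. \<Sum>v\<in>V. Poly_Mapping.single (u @ v) (Poly_Mapping.lookup f u * Poly_Mapping.lookup g v))
     = (\<Sum>u\<in>Poly_Mapping.keys f. \<Sum>v\<in>V. Poly_Mapping.single (u @ v) (Poly_Mapping.lookup f u * Poly_Mapping.lookup g v))"
    by (rule sum.mono_neutral_right[OF assms(1,3)]) (auto simp: in_keys_iff)
  then show ?thesis unfolding ncmult_def inner by simp
qed

lemma ncmult_single:
  "ncmult (Poly_Mapping.single u a) (Poly_Mapping.single v b) = Poly_Mapping.single (u @ v) (a * b)"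
  by (subst ncmult_eq_sum_over[of "{u}" "{v}"]) auto

lemma foldr_ncmult_single_letters:
  "foldr ncmult (map (\<lambda>i. Poly_Mapping.single [h i] (1::'k::field)) xs) ncone
     = Poly_Mapping.single (map h xs) 1"
  by (induction xs) (simp_all add: ncone_def ncmult_single)

lemma subspace0_sum:
  assumes "subspace0 V" "finite I" "\<And>i. i \<in> I \<Longrightarrow> f i \<in> V"
  shows "sum f I \<in> V"
  using assms(2,3) by (induction I rule: finite_induct) (use assms(1) in \<open>simp_all add: subspace0_def\<close>)

definition words_over :: "nat \<Rightarrow> nat set \<Rightarrow> nat list set" where
  "words_over n D = {w. length w = n \<and> set w \<subseteq> D}"

definition all_words :: "nat \<Rightarrow> nat set \<Rightarrow> 'k::field ncpoly" where
  "all_words n D = (\<Sum>w\<in>words_over n D. Poly_Mapping.single w 1)"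

lemma finite_words_over: "finite D \<Longrightarrow> finite (words_over n D)"
  unfolding words_over_def using finite_lists_length_eq[of D n] by (simp add: conj_commute)

lemma words_over_0: "words_over 0 D = {[]}"
  by (auto simp: words_over_def)

lemma words_over_singleton: "words_over n {a} = {replicate n a}"
  by (auto simp: words_over_def intro!: replicate_eqI)

lemma lookup_all_words:
  "finite D \<Longrightarrow> Poly_Mapping.lookup (all_words n D :: 'k::field ncpoly) w = (if w \<in> words_over n D then 1 else 0)"
  unfolding all_words_def by (simp add: lookup_sum lookup_single when_def finite_words_over)

lemma keys_all_words: "finite D \<Longrightarrow> Poly_Mapping.keys (all_words n D :: 'k::field ncpoly) \<subseteq> words_over n D"
  by (auto simp: in_keys_iff lookup_all_words split: if_splits)

lemma all_words_one_in_free0: "finite D \<Longrightarrow> (all_words 1 D :: 'k::field ncpoly) \<in> free0"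
  by (simp add: free0_def in_keys_iff lookup_all_words words_over_def)

lemma ncmult_all_words_one:
  assumes "finite D"
  shows "ncmult (all_words 1 D) (all_words n D :: 'k::field ncpoly) = all_words (Suc n) D"
proof -
  have "ncmult (all_words 1 D) (all_words n D :: 'k ncpoly)
      = (\<Sum>u\<in>words_over 1 D. \<Sum>v\<in>words_over n D. Poly_Mapping.single (u @ v) 1)"
    using assms
    by (subst ncmult_eq_sum_over[of "words_over 1 D" "words_over n D"])
      (auto simp: finite_words_over keys_all_words lookup_all_words intro!: sum.cong)
  also have "\<dots> = (\<Sum>(u,v)\<in>words_over 1 D \<times> words_over n D. Poly_Mapping.single (u @ v) 1)"
    by (simp add: sum.cartesian_product)
  also have "\<dots> = all_words (Suc n) D"
    unfolding all_words_def
    by (rule sum.reindex_bij_witness[where i = "\<lambda>w. (take 1 w, drop 1 w)" and j = "\<lambda>(u,v). u @ v"])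
      (auto simp: words_over_def dest: in_set_takeD in_set_dropD)
  finally show ?thesis .
qed

lemma ncpow_all_words_one: "finite D \<Longrightarrow> ncpow (all_words 1 D) n = (all_words n D :: 'k::field ncpoly)"
proof (induction n)
  case 0
  show ?case by (simp add: ncpow_def all_words_def words_over_0 ncone_def)
next
  case (Suc n)
  then show ?case using ncmult_all_words_one[of D n] by (simp add: ncpow_def)
qed

lemma ncpow_ncvar_one: "ncpow (ncvar 1) n = (Poly_Mapping.single (replicate n 0) 1 :: 'k::field ncpoly)"
proof -
  have "ncvar 1 = (all_words 1 {0} :: 'k ncpoly)"
    by (simp add: all_words_def words_over_singleton ncvar_def)
  then have "ncpow (ncvar 1) n = (all_words n {0} :: 'k ncpoly)"
    by (simp only: ncpow_all_words_one finite.intros)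
  then show ?thesis
    by (simp add: all_words_def words_over_singleton)
qed

lemma wordeval_const_replicate: "wordeval (\<lambda>i. g) (replicate n a) = ncpow g n"
  by (induction n) (simp_all add: wordeval_def ncpow_def)

lemma ncsubst_const_ncpow_ncvar_one: "ncsubst (\<lambda>i. g) (ncpow (ncvar 1) n) = ncpow g n"
  unfolding ncpow_ncvar_one by (simp add: ncsubst_def wordeval_const_replicate)

lemma all_words_in_Tspace:
  assumes "Tspace V" "ncpow (ncvar 1) n \<in> V" "finite D"
  shows "(all_words n D :: 'k::field ncpoly) \<in> V"
proof -
  have "ncsubst (\<lambda>i. all_words 1 D :: 'k ncpoly) \<in> endo0"
    unfolding endo0_def using all_words_one_in_free0[OF assms(3)]
    by (intro CollectI exI[where x = "\<lambda>i. all_words 1 D"]) simp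
  then have "ncsubst (\<lambda>i. all_words 1 D) (ncpow (ncvar 1) n) \<in> V"
    using assms(1,2) by (simp add: Tspace_def)
  then show ?thesis
    by (simp only: ncsubst_const_ncpow_ncvar_one ncpow_all_words_one[OF assms(3)])
qed

lemma sum_Pow_minus_one_power_card:
  "finite B \<Longrightarrow> (\<Sum>S\<in>Pow B. (-1::'k::comm_ring_1) ^ card S) = (if B = {} then 1 else 0)"
  using prod_diff_conv_sum[of B "\<lambda>_. 1::'k" "\<lambda>_. 1"]
  by (cases "B = {}") (auto simp: power_0_left card_eq_0_iff)

lemma minus_one_power_diff:
  assumes "s \<le> n"
  shows "(-1::'k::comm_ring_1) ^ (n - s) = (-1) ^ n * (-1) ^ s"
proof -
  have "(-1::'k) ^ n = (-1) ^ (n - s) * (-1) ^ s"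
    using assms by (simp flip: power_add)
  then have "(-1::'k) ^ n * (-1) ^ s = (-1) ^ (n - s) * ((-1) ^ s * (-1) ^ s)"
    by (simp add: mult.assoc)
  also have "(-1::'k) ^ s * (-1) ^ s = 1"
    by (simp flip: power_add power_mult_distrib)
  finally show ?thesis by simp
qed

lemma sum_supersets_minus_one_power:
  assumes "finite P" "A \<subseteq> P"
  shows "(\<Sum>D\<in>Pow P. if A \<subseteq> D then (-1::'k::comm_ring_1) ^ (card P - card D) else 0)
       = (if A = P then 1 else 0)"
proof -
  have fA: "finite A" using assms finite_subset by blast
  have "(\<Sum>D\<in>Pow P. if A \<subseteq> D then (-1::'k) ^ (card P - card D) else 0)
      = (\<Sum>D\<in>{D\<in>Pow P. A \<subseteq> D}. (-1::'k) ^ (card P - card D))"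
    by (rule sum.inter_filter[symmetric]) (simp add: assms)
  also have "\<dots> = (\<Sum>S\<in>Pow (P - A). (-1::'k) ^ (card P - card (A \<union> S)))"
    by (rule sum.reindex_bij_witness[where j = "\<lambda>S. A \<union> S" and i = "\<lambda>D. D - A", symmetric])
      (use assms in auto)
  also have "\<dots> = (\<Sum>S\<in>Pow (P - A). (-1::'k) ^ card (P - A) * (-1) ^ card S)"
  proof (rule sum.cong[OF refl])
    fix S assume S: "S \<in> Pow (P - A)"
    then have "finite S" using assms finite_subset by blast
    then have "card (A \<union> S) = card A + card S" using S fA by (subst card_Un_disjoint) auto
    moreover have "card (P - A) = card P - card A" using assms fA by (simp add: card_Diff_subset)
    moreover have "card S \<le> card (P - A)" using S assms by (auto intro: card_mono)
    ultimately show "(-1::'k) ^ (card P - card (A \<union> S)) = (-1) ^ card (P - A) * (-1) ^ card S"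
      by (simp add: diff_diff_left flip: minus_one_power_diff)
  qed
  also have "\<dots> = (if A = P then 1 else 0)"
    using assms by (auto simp: sum_Pow_minus_one_power_card simp flip: sum_distrib_left)
  finally show ?thesis .
qed

text \<open>Permutations of {1..p} correspond to words using each letter 0..p-1 once;
  the shift by one comes from x_i being the letter i - 1.\<close>
definition perm_word :: "nat \<Rightarrow> (nat \<Rightarrow> nat) \<Rightarrow> nat list" where
  "perm_word p \<sigma> = map (\<lambda>i. \<sigma> i - 1) [1..<p+1]"

definition word_perm :: "nat \<Rightarrow> nat list \<Rightarrow> nat \<Rightarrow> nat" where
  "word_perm p w x = (if x \<in> {1..p} then w ! (x - 1) + 1 else x)"

definition perm_words :: "nat \<Rightarrow> nat list set" where
  "perm_words p = {w. length w = p \<and> set w = {0..<p}}"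

lemma finite_perm_words: "finite (perm_words p)"
  by (rule finite_subset[OF _ finite_words_over[of "{0..<p}" p]]) (auto simp: perm_words_def words_over_def)

lemma word_perm_perm_word:
  assumes "\<sigma> permutes {1..p}"
  shows "word_perm p (perm_word p \<sigma>) = \<sigma>"
proof
  fix x show "word_perm p (perm_word p \<sigma>) x = \<sigma> x"
  proof (cases "x \<in> {1..p}")
    case True
    then have "\<sigma> x \<in> {1..p}" using permutes_in_image[OF assms] by simp
    moreover have "perm_word p \<sigma> ! (x - 1) = \<sigma> x - 1"
      using True by (auto simp del: upt_Suc simp: perm_word_def)
    ultimately show ?thesis using True by (simp add: word_perm_def)
  next
    case False
    then show ?thesis
      unfolding word_perm_def if_not_P[OF False] by (rule permutes_not_in[OF assms, symmetric])
  qed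
qed

lemma perm_word_in_perm_words:
  assumes "\<sigma> permutes {1..p}"
  shows "perm_word p \<sigma> \<in> perm_words p"
proof -
  have "set (perm_word p \<sigma>) = (\<lambda>i. i - 1) ` (\<sigma> ` {1..p})"
    by (auto simp del: upt_Suc simp: perm_word_def image_image atLeastLessThanSuc_atLeastAtMost)
  also have "\<dots> = {0..<p}"
    using permutes_image[OF assms] by (auto simp: image_iff intro!: bexI[where x = "Suc _"])
  finally show ?thesis by (simp add: perm_words_def perm_word_def)
qed

lemma perm_word_word_perm:
  assumes "w \<in> perm_words p"
  shows "perm_word p (word_perm p w) = w"
  using assms by (intro nth_equalityI) (auto simp del: upt_Suc simp: perm_word_def word_perm_def perm_words_def)

lemma word_perm_permutes:
  assumes "w \<in> perm_words p"
  shows "word_perm p w permutes {1..p}"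
proof (rule bij_imp_permutes)
  have len: "length w = p" and set_w: "set w = {0..<p}" using assms by (auto simp: perm_words_def)
  then have "distinct w" by (intro card_distinct) simp
  have into: "word_perm p w ` {1..p} \<subseteq> {1..p}"
  proof
    fix y assume "y \<in> word_perm p w ` {1..p}"
    then obtain x where x: "x \<in> {1..p}" "y = w ! (x - 1) + 1" by (auto simp: word_perm_def)
    then have "w ! (x - 1) \<in> set w" using len by (intro nth_mem) auto
    then show "y \<in> {1..p}" using x set_w by auto
  qed
  have inj: "inj_on (word_perm p w) {1..p}"
  proof (rule inj_onI)
    fix x y assume xy: "x \<in> {1..p}" "y \<in> {1..p}" "word_perm p w x = word_perm p w y"
    then have "w ! (x - 1) = w ! (y - 1)" by (simp add: word_perm_def)
    then have "x - 1 = y - 1" using nth_eq_iff_index_eq[OF \<open>distinct w\<close>] xy len by auto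
    then show "x = y" using xy by auto
  qed
  show "bij_betw (word_perm p w) {1..p} {1..p}"
    using endo_inj_surj[OF _ into inj] inj by (simp add: bij_betw_def)
  show "word_perm p w x = x" if "x \<notin> {1..p}" for x
    using that unfolding word_perm_def by (rule if_not_P)
qed

lemma Spoly_eq_sum_perm_words: "Spoly p = (\<Sum>w\<in>perm_words p. Poly_Mapping.single w (1::'k::field))"
proof -
  have "Spoly p = (\<Sum>\<sigma>\<in>{\<sigma>. \<sigma> permutes {1..p}}. Poly_Mapping.single (perm_word p \<sigma>) (1::'k))"
    unfolding Spoly_def perm_word_def
    by (simp del: upt_Suc add: ncvar_def foldr_ncmult_single_letters)
  also have "\<dots> = (\<Sum>w\<in>perm_words p. Poly_Mapping.single w (1::'k))"
    by (rule sum.reindex_bij_witness[where j = "perm_word p" and i = "word_perm p"])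
      (auto simp: word_perm_perm_word perm_word_in_perm_words perm_word_word_perm
        word_perm_permutes[simplified])
  finally show ?thesis .
qed

lemma Spoly_eq_alternating_sum:
  "(Spoly p :: 'k::field ncpoly) = (\<Sum>D\<in>Pow {0..<p}. ncsmult ((-1) ^ (p - card D)) (all_words p D))"
proof (rule poly_mapping_eqI)
  fix v
  have "Poly_Mapping.lookup (\<Sum>D\<in>Pow {0..<p}. ncsmult ((-1) ^ (p - card D)) (all_words p D) :: 'k ncpoly) v
     = (\<Sum>D\<in>Pow {0..<p}. if set v \<subseteq> D \<and> length v = p then (-1::'k) ^ (card {0..<p} - card D) else 0)"
    unfolding lookup_sum
    by (intro sum.cong refl) (auto simp: lookup_ncsmult lookup_all_words words_over_def finite_subset)
  also have "\<dots> = (if v \<in> perm_words p then 1 else 0)"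
  proof (cases "length v = p \<and> set v \<subseteq> {0..<p}")
    case True
    then have "(\<Sum>D\<in>Pow {0..<p}. if set v \<subseteq> D \<and> length v = p then (-1::'k) ^ (card {0..<p} - card D) else 0)
        = (\<Sum>D\<in>Pow {0..<p}. if set v \<subseteq> D then (-1::'k) ^ (card {0..<p} - card D) else 0)"
      by simp
    also have "\<dots> = (if set v = {0..<p} then 1 else 0)"
      using True by (intro sum_supersets_minus_one_power) auto
    finally show ?thesis using True by (simp add: perm_words_def)
  next
    case False
    then have "v \<notin> perm_words p" by (auto simp: perm_words_def)
    moreover have "(\<Sum>D\<in>Pow {0..<p}. if set v \<subseteq> D \<and> length v = p then (-1::'k) ^ (card {0..<p} - card D) else 0) = 0"
      using False by (intro sum.neutral) auto
    ultimately show ?thesis by simp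
  qed
  finally show "Poly_Mapping.lookup (Spoly p :: 'k ncpoly) v
     = Poly_Mapping.lookup (\<Sum>D\<in>Pow {0..<p}. ncsmult ((-1) ^ (p - card D)) (all_words p D) :: 'k ncpoly) v"
    by (simp add: Spoly_eq_sum_perm_words lookup_sum lookup_single when_def finite_perm_words)
qed

lemma Spoly_in_Tspace:
  assumes "Tspace V" "ncpow (ncvar 1) p \<in> V"
  shows "(Spoly p :: 'k::field ncpoly) \<in> V"
proof -
  have sub: "subspace0 V" using assms(1) by (simp add: Tspace_def)
  show ?thesis
    unfolding Spoly_eq_alternating_sum
  proof (rule subspace0_sum[OF sub])
    fix D assume "D \<in> Pow {0..<p}"
    then have "finite D" using finite_subset by blast
    then show "ncsmult ((-1) ^ (p - card D)) (all_words p D :: 'k ncpoly) \<in> V"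
      using all_words_in_Tspace[OF assms] sub by (simp add: subspace0_def)
  qed simp
qed

lemma Tgen_mono: "A \<subseteq> B \<Longrightarrow> Tgen A \<subseteq> Tgen B"
  unfolding Tgen_def by blast

lemma setmult_mono: "A \<subseteq> A' \<Longrightarrow> B \<subseteq> B' \<Longrightarrow> setmult A B \<subseteq> setmult A' B'"
  unfolding setmult_def by blast

lemma Titer_mono_Tgen:
  assumes "Tgen A \<subseteq> Tgen B"
  shows "Titer A n \<subseteq> Titer B n"
  by (induction n) (simp_all add: assms Tgen_mono setmult_mono)

lemma Tgen_Spoly_subset: "(Tgen {Spoly p} :: 'k::field ncpoly set) \<subseteq> Tgen {ncpow (ncvar 1) p}"
  unfolding Tgen_def using Spoly_in_Tspace by blast

theorem corollary4p2:
  fixes p m :: nat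
  assumes "prime p" and "CHAR('k::field) = p" and "m \<ge> 1"
  shows "(Sseq p m :: 'k ncpoly set) \<subseteq> Hseq p m"
  unfolding Sseq_def Hseq_def by (rule Titer_mono_Tgen[OF Tgen_Spoly_subset])

end
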